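(* Let $\Gamma$ be a semisimple graph structure with transition matrix $M$ of spectral radius $\lambda>1$ and initial vertex $v_0$ of large growth. Let $\rho_i=\lim_n e_i^TM^n\mathbf 1/\lambda^n$, $u_i=\lim_n e_0^TM^ne_i/\lambda^n$, and let $\mathbb P$ be the Markov measure on infinite paths with initial probabilities $\pi_i=u_i\rho_i/\rho_0$ and transition probability $\rho_j/(\lambda\rho_i)$ on each edge from $v_i$ to $v_j$; let $\mathbb P_m$ be the law of the first $m$ edges. For each $n$, choose a path $\gamma$ of length $n$ starting at $v_0$ uniformly at random and let $\tilde\lambda_n$ be the law of its subpath from position $\lfloor\log n\rfloor$ to position $n-\lfloor\log n\rfloor$. Then $\|\mathbb P_{n-2\lfloor\log n\rfloor}-\tilde\lambda_n\|_{TV}\to0$ as $n\to\infty$.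
   Context: $\Gamma$ is a finite directed graph with transition matrix $M$ ($M_{ij}$ the number of edges $v_i\to v_j$), so $e_i^TM^ne_j$ counts paths of length $n$ from $v_i$ to $v_j$; $\mathbf 1$ is the all-ones vector. $M$ is semisimple if every eigenvalue of modulus $\lambda$ has equal geometric and algebraic multiplicity and $\lambda$ is the only eigenvalue of maximal modulus (so $\lim M^n/\lambda^n$ exists). A vertex $v$ has large growth if the number of paths of length $n$ starting at $v$ grows like $\lambda^{n+o(n)}$. *)

theory Defs
  imports "Jordan_Normal_Form.Spectral_Radius"
          "Jordan_Normal_Form.Jordan_Normal_Form_Uniqueness"
          "HOL-Library.Landau_Symbols"
begin

definition graph_ok :: "nat \<Rightarrow> 'e set \<Rightarrow> ('e \<Rightarrow> nat) \<Rightarrow> ('e \<Rightarrow> nat) \<Rightarrow> bool" where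
  "graph_ok N E src tgt \<longleftrightarrow> finite E \<and> (\<forall>e\<in>E. src e < N \<and> tgt e < N)"

definition trans_mat :: "nat \<Rightarrow> 'e set \<Rightarrow> ('e \<Rightarrow> nat) \<Rightarrow> ('e \<Rightarrow> nat) \<Rightarrow> complex mat" where
  "trans_mat N E src tgt =
     mat N N (\<lambda>(i,j). of_nat (card {e\<in>E. src e = i \<and> tgt e = j}))"

fun is_walk_from :: "('e \<Rightarrow> nat) \<Rightarrow> ('e \<Rightarrow> nat) \<Rightarrow> nat \<Rightarrow> 'e list \<Rightarrow> bool" where
  "is_walk_from src tgt v [] = True"
| "is_walk_from src tgt v (e # es) = (src e = v \<and> is_walk_from src tgt (tgt e) es)"

definition paths_from :: "'e set \<Rightarrow> ('e \<Rightarrow> nat) \<Rightarrow> ('e \<Rightarrow> nat) \<Rightarrow> nat \<Rightarrow> nat \<Rightarrow> 'e list set" where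
  "paths_from E src tgt v n =
     {es. length es = n \<and> set es \<subseteq> E \<and> is_walk_from src tgt v es}"

definition semisimple :: "complex mat \<Rightarrow> bool" where
  "semisimple A \<longleftrightarrow>
     (\<forall>ev. eigenvalue A ev \<and> cmod ev = spectral_radius A \<longrightarrow>
            dim_gen_eigenspace A ev 1 = Polynomial.order ev (char_poly A)) \<and>
     (\<forall>ev. eigenvalue A ev \<and> cmod ev = spectral_radius A \<longrightarrow>
            ev = complex_of_real (spectral_radius A))"

definition large_growth :: "'e set \<Rightarrow> ('e \<Rightarrow> nat) \<Rightarrow> ('e \<Rightarrow> nat) \<Rightarrow> real \<Rightarrow> nat \<Rightarrow> bool" where
  "large_growth E src tgt lam v \<longleftrightarrow>
     (\<exists>f :: nat \<Rightarrow> real. f \<in> o(\<lambda>n. real n) \<and>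
        (\<forall>n. real (card (paths_from E src tgt v n)) = lam powr (real n + f n)))"

fun markov_prob_from :: "('e \<Rightarrow> nat) \<Rightarrow> ('e \<Rightarrow> nat) \<Rightarrow> ('e \<Rightarrow> real) \<Rightarrow> nat \<Rightarrow> 'e list \<Rightarrow> real" where
  "markov_prob_from src tgt p v [] = 1"
| "markov_prob_from src tgt p v (e # es) =
     (if src e = v then p e * markov_prob_from src tgt p (tgt e) es else 0)"

definition markov_prob :: "'e set \<Rightarrow> ('e \<Rightarrow> nat) \<Rightarrow> ('e \<Rightarrow> nat) \<Rightarrow> (nat \<Rightarrow> real) \<Rightarrow> ('e \<Rightarrow> real)
     \<Rightarrow> 'e list \<Rightarrow> real" where
  "markov_prob E src tgt \<pi> p es =
     (if set es \<subseteq> E then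
        (case es of [] \<Rightarrow> 1 | e # _ \<Rightarrow> \<pi> (src e) * markov_prob_from src tgt p (src e) es)
      else 0)"

definition tv_dist :: "'a set \<Rightarrow> ('a \<Rightarrow> real) \<Rightarrow> ('a \<Rightarrow> real) \<Rightarrow> real" where
  "tv_dist S P Q = (1/2) * (\<Sum>x\<in>S. \<bar>P x - Q x\<bar>)"

end

theory Submission
  imports Defs "HOL-Real_Asymp.Real_Asymp"
begin

text \<open>The entry (i, j) of M^n counts the paths of length n from v_i to v_j. For semisimple M the
  Jordan form shows that M^n / lambda^n converges, at rate (n + 1)^N q^n with q < 1, to the projection
  onto the dominant eigenspace; this yields the limits rho and u, and together with the large growth
  of v_0 it forces rho_0 > 0. A path q of length m from a to b has Markov probability
  u_a rho_b / (rho_0 lambda^m), and among the paths of length k + m + k from v_0 exactly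
  (number of paths of length k from v_0 to a) * (number of paths of length k from b) have q as
  middle segment. So both laws depend on q only through its endpoints, and after normalising each
  count by the matching power of lambda the difference of the two weights of every pair (a, b)
  tends to 0 as k and m tend to infinity.\<close>

fun walk_end :: "('e \<Rightarrow> nat) \<Rightarrow> nat \<Rightarrow> 'e list \<Rightarrow> nat" where
  "walk_end tgt v [] = v"
| "walk_end tgt v (e # es) = walk_end tgt (tgt e) es"

definition paths_between :: "'e set \<Rightarrow> ('e \<Rightarrow> nat) \<Rightarrow> ('e \<Rightarrow> nat) \<Rightarrow> nat \<Rightarrow> nat \<Rightarrow> nat \<Rightarrow> 'e list set" where
  "paths_between E src tgt v n w = {\<alpha> \<in> paths_from E src tgt v n. walk_end tgt v \<alpha> = w}"

lemma is_walk_from_append: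
  "is_walk_from src tgt v (xs @ ys) \<longleftrightarrow>
   is_walk_from src tgt v xs \<and> is_walk_from src tgt (walk_end tgt v xs) ys"
  by (induction xs arbitrary: v) auto

lemma finite_paths_from: "finite E \<Longrightarrow> finite (paths_from E src tgt v n)"
  unfolding paths_from_def
  by (rule finite_subset[OF _ finite_lists_length_eq[of E n]]) auto

lemma paths_from_Suc:
  "paths_from E src tgt v (Suc n) = (\<Union>e\<in>{e\<in>E. src e = v}. (#) e ` paths_from E src tgt (tgt e) n)"
  unfolding paths_from_def by (auto simp: length_Suc_conv)

lemma walk_end_less:
  "graph_ok N E src tgt \<Longrightarrow> v < N \<Longrightarrow> set \<alpha> \<subseteq> E \<Longrightarrow> walk_end tgt v \<alpha> < N"
  by (induction \<alpha> arbitrary: v) (auto simp: graph_ok_def)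

lemma card_paths_between_Suc:
  assumes "finite E"
  shows "card (paths_between E src tgt v (Suc n) w) =
    (\<Sum>e\<in>{e\<in>E. src e = v}. card (paths_between E src tgt (tgt e) n w))"
proof -
  have "paths_between E src tgt v (Suc n) w =
      (\<Union>e\<in>{e\<in>E. src e = v}. (#) e ` paths_between E src tgt (tgt e) n w)"
    unfolding paths_between_def paths_from_Suc by auto
  also have "card \<dots> = (\<Sum>e\<in>{e\<in>E. src e = v}. card ((#) e ` paths_between E src tgt (tgt e) n w))"
    by (rule card_UN_disjoint) (auto simp: assms finite_paths_from paths_between_def)
  finally show ?thesis
    by (simp add: card_image)
qed

lemma sum_edges_from_by_tgt:
  assumes "graph_ok N E src tgt"
  shows "(\<Sum>e\<in>{e\<in>E. src e = v}. f (tgt e)) =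
    (\<Sum>w<N. of_nat (card {e\<in>E. src e = v \<and> tgt e = w}) * f w)"
proof -
  have "(\<Sum>e\<in>{e\<in>E. src e = v}. f (tgt e)) =
      (\<Sum>w<N. \<Sum>e\<in>{e\<in>E. src e = v \<and> tgt e = w}. f (tgt e))"
    by (subst sum.group[symmetric, where g = tgt and T = "{..<N}"])
      (use assms in \<open>auto simp: graph_ok_def intro!: sum.cong\<close>)
  also have "\<dots> = (\<Sum>w<N. of_nat (card {e\<in>E. src e = v \<and> tgt e = w}) * f w)"
  proof (intro sum.cong refl)
    fix w
    have "(\<Sum>e\<in>{e\<in>E. src e = v \<and> tgt e = w}. f (tgt e)) = (\<Sum>e\<in>{e\<in>E. src e = v \<and> tgt e = w}. f w)"
      by (rule sum.cong) auto
    then show "(\<Sum>e\<in>{e\<in>E. src e = v \<and> tgt e = w}. f (tgt e)) =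
        of_nat (card {e\<in>E. src e = v \<and> tgt e = w}) * f w"
      by simp
  qed
  finally show ?thesis .
qed

lemma trans_mat_carrier: "trans_mat N E src tgt \<in> carrier_mat N N"
  unfolding trans_mat_def by auto

lemma pow_mat_Suc_left:
  assumes "A \<in> carrier_mat n n"
  shows "A ^\<^sub>m Suc k = A * A ^\<^sub>m k"
proof (induction k)
  case (Suc k)
  have "A ^\<^sub>m Suc (Suc k) = (A * A ^\<^sub>m k) * A"
    using Suc by simp
  also have "\<dots> = A * (A ^\<^sub>m k * A)"
    using assms by (intro assoc_mult_mat) auto
  finally show ?case by simp
qed (use assms in simp)

lemma trans_mat_pow_entry:
  assumes g: "graph_ok N E src tgt" and v: "v < N" and w: "w < N"
  shows "(trans_mat N E src tgt ^\<^sub>m n) $$ (v, w) = of_nat (card (paths_between E src tgt v n w))"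
  using v
proof (induction n arbitrary: v)
  case 0
  have "paths_between E src tgt v 0 w = (if v = w then {[]} else {})"
    by (auto simp: paths_between_def paths_from_def)
  then show ?case
    using 0 w trans_mat_carrier[of N E src tgt] by simp
next
  case (Suc n)
  let ?M = "trans_mat N E src tgt"
  have "(?M ^\<^sub>m Suc n) $$ (v, w) = (\<Sum>c<N. ?M $$ (v, c) * (?M ^\<^sub>m n) $$ (c, w))"
    unfolding pow_mat_Suc_left[OF trans_mat_carrier]
    using Suc.prems w trans_mat_carrier[of N E src tgt]
    by (simp add: scalar_prod_def lessThan_atLeast0)
  also have "\<dots> = (\<Sum>c<N. of_nat (card {e\<in>E. src e = v \<and> tgt e = c}) *
      of_nat (card (paths_between E src tgt c n w)))"
    using Suc by (intro sum.cong refl) (simp add: trans_mat_def)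
  also have "\<dots> = of_nat (card (paths_between E src tgt v (Suc n) w))"
    using g by (simp add: sum_edges_from_by_tgt[OF g, symmetric] card_paths_between_Suc graph_ok_def)
  finally show ?case .
qed

lemma sum_paths_from_by_end:
  fixes g :: "nat \<Rightarrow> 'a :: semiring_1"
  assumes "graph_ok N E src tgt" and "v < N"
  shows "(\<Sum>\<alpha>\<in>paths_from E src tgt v n. g (walk_end tgt v \<alpha>)) =
    (\<Sum>w<N. of_nat (card (paths_between E src tgt v n w)) * g w)"
proof -
  have "(\<Sum>\<alpha>\<in>paths_from E src tgt v n. g (walk_end tgt v \<alpha>)) =
      (\<Sum>w<N. \<Sum>\<alpha>\<in>paths_between E src tgt v n w. g (walk_end tgt v \<alpha>))"
    unfolding paths_between_def
    by (rule sum.group[symmetric, OF finite_paths_from])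
      (use assms in \<open>auto simp: graph_ok_def paths_from_def walk_end_less\<close>)
  then show ?thesis
    by (simp add: paths_between_def)
qed

lemma card_paths_from_eq_sum:
  assumes "graph_ok N E src tgt" and "v < N"
  shows "card (paths_from E src tgt v n) = (\<Sum>w<N. card (paths_between E src tgt v n w))"
  using sum_paths_from_by_end[OF assms, where g = "\<lambda>_. 1 :: nat"] by simp

lemma card_paths_from_tgt_le:
  assumes "finite E" and "e \<in> E"
  shows "card (paths_from E src tgt (tgt e) n) \<le> card (paths_from E src tgt (src e) (Suc n))"
proof -
  have "card (paths_from E src tgt (tgt e) n) = card ((#) e ` paths_from E src tgt (tgt e) n)"
    by (simp add: card_image)
  also have "\<dots> \<le> card (paths_from E src tgt (src e) (Suc n))"
    by (rule card_mono) (use assms in \<open>auto simp: finite_paths_from paths_from_Suc\<close>)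
  finally show ?thesis .
qed

lemma middle_segment_eq:
  assumes "\<gamma> \<in> paths_from E src tgt v n" and "take m (drop k \<gamma>) = q" and "q \<noteq> []"
  shows "\<gamma> = take k \<gamma> @ q @ drop (k + m) \<gamma>"
    and "walk_end tgt v (take k \<gamma>) = src (hd q)"
    and "is_walk_from src tgt (src (hd q)) q"
    and "is_walk_from src tgt (walk_end tgt (src (hd q)) q) (drop (k + m) \<gamma>)"
proof -
  show dec: "\<gamma> = take k \<gamma> @ q @ drop (k + m) \<gamma>"
    using assms(2) by (metis append_take_drop_id drop_drop add.commute)
  have "is_walk_from src tgt (walk_end tgt v (take k \<gamma>)) (q @ drop (k + m) \<gamma>)"
    using assms(1) dec is_walk_from_append unfolding paths_from_def by (metis mem_Collect_eq)
  moreover show "walk_end tgt v (take k \<gamma>) = src (hd q)"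
    using calculation \<open>q \<noteq> []\<close> by (cases q) auto
  ultimately show "is_walk_from src tgt (src (hd q)) q"
    and "is_walk_from src tgt (walk_end tgt (src (hd q)) q) (drop (k + m) \<gamma>)"
    by (simp_all add: is_walk_from_append)
qed

lemma card_middle_segment:
  assumes "q \<in> paths_from E src tgt a m" and "q \<noteq> []"
  shows "card {\<gamma> \<in> paths_from E src tgt v (k + m + k'). take m (drop k \<gamma>) = q} =
    card (paths_between E src tgt v k a) * card (paths_from E src tgt (walk_end tgt a q) k')"
proof -
  have a: "a = src (hd q)"
    using assms by (cases q) (auto simp: paths_from_def)
  let ?A = "paths_between E src tgt v k a"
  let ?B = "paths_from E src tgt (walk_end tgt a q) k'"
  let ?glue = "\<lambda>(\<alpha>, \<beta>). \<alpha> @ q @ \<beta>"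
  have "{\<gamma> \<in> paths_from E src tgt v (k + m + k'). take m (drop k \<gamma>) = q} = ?glue ` (?A \<times> ?B)"
  proof (intro equalityI subsetI)
    fix \<gamma> assume "\<gamma> \<in> {\<gamma> \<in> paths_from E src tgt v (k + m + k'). take m (drop k \<gamma>) = q}"
    then have \<gamma>: "\<gamma> \<in> paths_from E src tgt v (k + m + k')" and seg: "take m (drop k \<gamma>) = q"
      by auto
    note split = middle_segment_eq[OF \<gamma> seg \<open>q \<noteq> []\<close>, folded a]
    have "is_walk_from src tgt v (take k \<gamma>)"
      using \<gamma> split(1) is_walk_from_append unfolding paths_from_def by (metis mem_Collect_eq)
    then have "(take k \<gamma>, drop (k + m) \<gamma>) \<in> ?A \<times> ?B"
      using \<gamma> split by (auto simp: paths_between_def paths_from_def dest: in_set_takeD in_set_dropD)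
    then show "\<gamma> \<in> ?glue ` (?A \<times> ?B)"
      using split(1) by force
  next
    fix \<gamma> assume "\<gamma> \<in> ?glue ` (?A \<times> ?B)"
    then show "\<gamma> \<in> {\<gamma> \<in> paths_from E src tgt v (k + m + k'). take m (drop k \<gamma>) = q}"
      using assms(1) by (auto simp: paths_between_def paths_from_def is_walk_from_append)
  qed
  moreover have "inj_on ?glue (?A \<times> ?B)"
    by (auto simp: inj_on_def paths_between_def paths_from_def)
  ultimately show ?thesis
    by (simp add: card_image card_cartesian_product)
qed

lemma middle_segment_not_walk:
  assumes "q \<noteq> []" and "\<not> is_walk_from src tgt (src (hd q)) q"
  shows "{\<gamma> \<in> paths_from E src tgt v n. take m (drop k \<gamma>) = q} = {}"
  using middle_segment_eq(3)[OF _ _ assms(1)] assms(2) by blast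

definition middle_law :: "'e set \<Rightarrow> ('e \<Rightarrow> nat) \<Rightarrow> ('e \<Rightarrow> nat) \<Rightarrow> nat \<Rightarrow> nat \<Rightarrow> nat \<Rightarrow> 'e list \<Rightarrow> real" where
  "middle_law E src tgt v k n q =
     real (card {\<gamma> \<in> paths_from E src tgt v n. take (n - 2 * k) (drop k \<gamma>) = q})
     / real (card (paths_from E src tgt v n))"

lemma middle_law_walk:
  assumes "q \<in> paths_from E src tgt a m" and "q \<noteq> []"
  shows "middle_law E src tgt v k (k + m + k) q =
    real (card (paths_between E src tgt v k a)) * real (card (paths_from E src tgt (walk_end tgt a q) k))
    / real (card (paths_from E src tgt v (k + m + k)))"
  using card_middle_segment[OF assms, of v k k] by (simp add: middle_law_def)

lemma middle_law_not_walk: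
  "q \<noteq> [] \<Longrightarrow> \<not> is_walk_from src tgt (src (hd q)) q \<Longrightarrow> middle_law E src tgt v k n q = 0"
  unfolding middle_law_def by (simp add: middle_segment_not_walk)

lemma sum_lists_by_start:
  assumes g: "graph_ok N E src tgt" and "m \<ge> 1"
    and H: "\<And>q. q \<noteq> [] \<Longrightarrow> \<not> is_walk_from src tgt (src (hd q)) q \<Longrightarrow> H q = 0"
  shows "(\<Sum>q\<in>{q. set q \<subseteq> E \<and> length q = m}. H q) = (\<Sum>a<N. \<Sum>q\<in>paths_from E src tgt a m. H q)"
proof -
  let ?Q = "{q. set q \<subseteq> E \<and> length q = m}"
  have fin: "finite E"
    using g by (simp add: graph_ok_def)
  have ne: "q \<noteq> []" if "q \<in> ?Q" for q
    using that \<open>m \<ge> 1\<close> by auto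
  have "(\<Sum>q\<in>?Q. H q) = (\<Sum>a<N. \<Sum>q\<in>{q \<in> ?Q. src (hd q) = a}. H q)"
  proof (rule sum.group[symmetric])
    have "hd q \<in> E" if "q \<in> ?Q" for q
      using that ne[OF that] by auto
    then show "(\<lambda>q. src (hd q)) ` ?Q \<subseteq> {..<N}"
      using g by (auto simp: graph_ok_def)
  qed (simp_all add: finite_lists_length_eq[OF fin])
  also have "\<dots> = (\<Sum>a<N. \<Sum>q\<in>paths_from E src tgt a m. H q)"
  proof (rule sum.cong[OF refl], rule sum.mono_neutral_right)
    fix a
    show "finite {q \<in> ?Q. src (hd q) = a}"
      by (rule finite_subset[of _ ?Q]) (auto simp: finite_lists_length_eq[OF fin])
    show "paths_from E src tgt a m \<subseteq> {q \<in> ?Q. src (hd q) = a}"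
    proof
      fix q assume q: "q \<in> paths_from E src tgt a m"
      then have "q \<noteq> []"
        using \<open>m \<ge> 1\<close> by (auto simp: paths_from_def)
      with q show "q \<in> {q \<in> ?Q. src (hd q) = a}"
        by (cases q) (auto simp: paths_from_def)
    qed
    show "\<forall>q \<in> {q \<in> ?Q. src (hd q) = a} - paths_from E src tgt a m. H q = 0"
    proof
      fix q assume "q \<in> {q \<in> ?Q. src (hd q) = a} - paths_from E src tgt a m"
      then have "q \<in> ?Q" and "\<not> is_walk_from src tgt (src (hd q)) q"
        by (auto simp: paths_from_def)
      then show "H q = 0"
        using H ne by blast
    qed
  qed
  finally show ?thesis .
qed

lemma markov_prob_from_not_walk:
  "\<not> is_walk_from src tgt a q \<Longrightarrow> markov_prob_from src tgt p a q = 0"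
  by (induction q arbitrary: a) auto

lemma markov_prob_nonempty:
  "set q \<subseteq> E \<Longrightarrow> q \<noteq> [] \<Longrightarrow>
    markov_prob E src tgt \<pi> p q = \<pi> (src (hd q)) * markov_prob_from src tgt p (src (hd q)) q"
  by (cases q) (auto simp: markov_prob_def)

lemma markov_prob_not_walk:
  "q \<noteq> [] \<Longrightarrow> \<not> is_walk_from src tgt (src (hd q)) q \<Longrightarrow> markov_prob E src tgt \<pi> p q = 0"
  by (cases "set q \<subseteq> E") (simp_all add: markov_prob_nonempty markov_prob_from_not_walk, simp add: markov_prob_def)

context
  fixes N E src tgt and lam :: real and \<rho> :: "nat \<Rightarrow> real"
  assumes graph: "graph_ok N E src tgt" and lam: "lam > 0"
    and nonneg: "\<And>i. i < N \<Longrightarrow> \<rho> i \<ge> 0"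
    and edge: "\<And>e. e \<in> E \<Longrightarrow> \<rho> (tgt e) \<le> lam * \<rho> (src e)"
begin

lemma walk_end_le_pow:
  "a < N \<Longrightarrow> set w \<subseteq> E \<Longrightarrow> is_walk_from src tgt a w \<Longrightarrow> \<rho> (walk_end tgt a w) \<le> lam ^ length w * \<rho> a"
proof (induction w arbitrary: a)
  case (Cons e w)
  have "\<rho> (walk_end tgt (tgt e) w) \<le> lam ^ length w * \<rho> (tgt e)"
    using Cons graph by (auto simp: graph_ok_def)
  also have "\<dots> \<le> lam ^ length w * (lam * \<rho> a)"
    using Cons.prems edge lam by (intro mult_left_mono) auto
  finally show ?case
    by (simp add: mult_ac)
qed simp

lemma markov_prob_from_walk:
  assumes "a < N" and "set w \<subseteq> E" and "is_walk_from src tgt a w"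
  shows "markov_prob_from src tgt (\<lambda>e. \<rho> (tgt e) / (lam * \<rho> (src e))) a w * (lam ^ length w * \<rho> a) =
    \<rho> (walk_end tgt a w)"
  using assms
proof (induction w arbitrary: a)
  case (Cons e w)
  show ?case
  proof (cases "\<rho> a = 0")
    case True
    then show ?thesis
      using walk_end_le_pow[OF Cons.prems] nonneg[OF walk_end_less[OF graph Cons.prems(1,2)]] by simp
  next
    case False
    have "tgt e < N"
      using Cons.prems graph by (auto simp: graph_ok_def)
    then show ?thesis
      using Cons False lam by (auto simp: field_simps)
  qed
qed simp

end

lemma jordan_block_pow_entry_bound:
  fixes a :: complex and lam mu :: real
  assumes "0 < mu" "mu < lam" and "norm a < mu" and "m \<le> n" and "i < m" "j < m"
  shows "norm ((jordan_block m a ^\<^sub>m k) $$ (i,j) / of_real lam ^ k)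
     \<le> max 1 (1/mu) ^ n * (real k + 1) ^ n * (mu / lam) ^ k"
proof (cases "i \<le> j \<and> j - i \<le> k")
  case False
  then have "(jordan_block m a ^\<^sub>m k) $$ (i,j) = 0"
    using assms by (auto simp: jordan_block_pow)
  then show ?thesis
    using assms by simp
next
  case True
  define d where "d = j - i"
  have "d \<le> k" and "d \<le> n"
    using True assms by (auto simp: d_def)
  have "(jordan_block m a ^\<^sub>m k) $$ (i,j) = of_nat (k choose d) * a ^ (k - d)"
    using True assms by (auto simp: jordan_block_pow d_def intro!: arg_cong[of _ _ "(^) a"])
  then have "norm ((jordan_block m a ^\<^sub>m k) $$ (i,j) / of_real lam ^ k) =
      real (k choose d) * norm a ^ (k - d) / lam ^ k"
    using assms by (simp add: norm_mult norm_divide norm_power)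
  also have "\<dots> \<le> real (k ^ d) * mu ^ (k - d) / lam ^ k"
    using assms binomial_le_pow[OF \<open>d \<le> k\<close>]
    by (intro divide_right_mono mult_mono power_mono) auto
  also have "\<dots> = real k ^ d * (1 / mu) ^ d * (mu / lam) ^ k"
    using assms \<open>d \<le> k\<close> by (simp add: field_simps power_diff)
  also have "\<dots> \<le> (real k + 1) ^ n * max 1 (1/mu) ^ n * (mu / lam) ^ k"
  proof (intro mult_right_mono mult_mono)
    show "real k ^ d \<le> (real k + 1) ^ n"
      by (rule order.trans[of _ "(real k + 1) ^ d"]) (auto intro: power_mono power_increasing \<open>d \<le> n\<close>)
    have "(1 / mu) ^ d \<le> max 1 (1 / mu) ^ d"
      using assms by (intro power_mono) auto
    also have "\<dots> \<le> max 1 (1 / mu) ^ n"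
      using \<open>d \<le> n\<close> by (intro power_increasing) auto
    finally show "(1 / mu) ^ d \<le> max 1 (1 / mu) ^ n" .
  qed (use assms in auto)
  finally show ?thesis
    by (simp add: mult_ac)
qed

lemma dim_diag_block_mat_square:
  assumes "\<And>m a. F m a \<in> carrier_mat m m"
  shows "diag_block_mat (map (\<lambda>(m,a). F m a) xs) \<in>
    carrier_mat (sum_list (map fst xs)) (sum_list (map fst xs))"
proof -
  have dims: "dim_row (F m a) = m" "dim_col (F m a) = m" for m a
    using assms[of m a] by auto
  have rows: "map dim_row (map (\<lambda>(m,a). F m a) xs) = map fst xs"
    and cols: "map dim_col (map (\<lambda>(m,a). F m a) xs) = map fst xs"
    by (induction xs) (auto simp: dims)
  show ?thesis
    unfolding carrier_mat_def dim_diag_block_mat mem_Collect_eq rows cols by simp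
qed

lemma diag_block_mat_entry_approx:
  fixes F G :: "nat \<Rightarrow> complex \<Rightarrow> complex mat" and s :: complex
  assumes F: "\<And>m a. F m a \<in> carrier_mat m m" and G: "\<And>m a. G m a \<in> carrier_mat m m"
    and approx: "\<And>m a i j. (m,a) \<in> set xs \<Longrightarrow> i < m \<Longrightarrow> j < m \<Longrightarrow>
        norm (F m a $$ (i,j) / s - G m a $$ (i,j)) \<le> c"
    and "c \<ge> 0" and "i < sum_list (map fst xs)" and "j < sum_list (map fst xs)"
  shows "norm (diag_block_mat (map (\<lambda>(m,a). F m a) xs) $$ (i,j) / s
      - diag_block_mat (map (\<lambda>(m,a). G m a) xs) $$ (i,j)) \<le> c"
  using approx assms(5,6)
proof (induction xs arbitrary: i j)
  case (Cons ma xs)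
  obtain m a where ma: "ma = (m,a)"
    by force
  let ?S = "sum_list (map fst xs)"
  let ?F = "diag_block_mat (map (\<lambda>(m,a). F m a) xs)"
  let ?G = "diag_block_mat (map (\<lambda>(m,a). G m a) xs)"
  have ij: "i < m + ?S" "j < m + ?S"
    using Cons.prems ma by auto
  have entry: "diag_block_mat (map (\<lambda>(m,a). H m a) (ma # xs)) $$ (i,j) =
      (if i < m then if j < m then H m a $$ (i,j) else 0
       else if j < m then 0 else diag_block_mat (map (\<lambda>(m,a). H m a) xs) $$ (i - m, j - m))"
    if "\<And>m a. H m a \<in> carrier_mat m m" for H :: "nat \<Rightarrow> complex \<Rightarrow> complex mat"
    using ij that[of m a] dim_diag_block_mat_square[of H xs, OF that]
    by (auto simp: ma Let_def)
  have "norm (?F $$ (i - m, j - m) / s - ?G $$ (i - m, j - m)) \<le> c" if "\<not> i < m" "\<not> j < m"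
  proof (rule Cons.IH)
    show "norm (F m' a' $$ (i',j') / s - G m' a' $$ (i',j')) \<le> c"
      if "(m',a') \<in> set xs" "i' < m'" "j' < m'" for m' a' i' j'
      using Cons.prems(1)[of m' a' i' j'] that by simp
  qed (use that ij in auto)
  moreover have "norm (F m a $$ (i,j) / s - G m a $$ (i,j)) \<le> c" if "i < m" "j < m"
    using Cons.prems(1)[of m a i j] that by (simp add: ma)
  ultimately show ?case
    unfolding entry[OF F] entry[OF G] using \<open>c \<ge> 0\<close> by auto
qed simp

lemma mat_mult3_entry:
  fixes P J Q :: "'a :: comm_ring_1 mat"
  assumes "P \<in> carrier_mat n n" "J \<in> carrier_mat n n" "Q \<in> carrier_mat n n" and "i < n" "j < n"
  shows "(P * J * Q) $$ (i,j) = (\<Sum>y<n. \<Sum>x<n. P $$ (i,x) * J $$ (x,y) * Q $$ (y,j))"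
  using assms by (simp add: scalar_prod_def lessThan_atLeast0 sum_distrib_right del: assoc_mult_mat)

definition jordan_eigenprojection :: "complex \<Rightarrow> (nat \<times> complex) list \<Rightarrow> complex mat" where
  "jordan_eigenprojection ev n_as =
     diag_block_mat (map (\<lambda>(m,a). if a = ev then 1\<^sub>m m else 0\<^sub>m m m) n_as)"

lemma jordan_matrix_pow_approx:
  fixes n_as :: "(nat \<times> complex) list" and lam mu :: real
  defines "d \<equiv> sum_list (map fst n_as)"
  assumes "0 < mu" "mu < lam"
    and dominant: "\<And>m. (m, of_real lam) \<in> set n_as \<Longrightarrow> m = 1"
    and subdominant: "\<And>m a. (m,a) \<in> set n_as \<Longrightarrow> a \<noteq> of_real lam \<Longrightarrow> norm a < mu"
    and "i < d" "j < d"
  shows "norm ((jordan_matrix n_as ^\<^sub>m k) $$ (i,j) / of_real lam ^ k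
      - jordan_eigenprojection (of_real lam) n_as $$ (i,j)) \<le> max 1 (1/mu) ^ d * (real k + 1) ^ d * (mu/lam) ^ k"
  unfolding jordan_matrix_pow jordan_eigenprojection_def
proof (rule diag_block_mat_entry_approx)
  fix m a i j assume ma: "(m,a) \<in> set n_as" and ij: "i < m" "j < m"
  show "norm ((jordan_block m a ^\<^sub>m k) $$ (i,j) / of_real lam ^ k
      - (if a = of_real lam then 1\<^sub>m m else 0\<^sub>m m m) $$ (i,j))
    \<le> max 1 (1/mu) ^ d * (real k + 1) ^ d * (mu/lam) ^ k"
  proof (cases "a = of_real lam")
    case True
    then have "m = 1" and "i = 0" "j = 0"
      using dominant ma ij by auto
    then show ?thesis
      using True \<open>0 < mu\<close> \<open>mu < lam\<close> by (simp add: jordan_block_pow)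
  next
    case False
    have "m \<le> d"
      unfolding d_def using ma by (intro member_le_sum_list) force+
    then show ?thesis
      using False ij jordan_block_pow_entry_bound[OF assms(2,3) subdominant[OF ma False]] by simp
  qed
qed (use assms in auto)

lemma mat_mult3_entry_approx:
  fixes P J G Q :: "complex mat"
  assumes P: "P \<in> carrier_mat n n" and J: "J \<in> carrier_mat n n" and G: "G \<in> carrier_mat n n"
    and Q: "Q \<in> carrier_mat n n"
    and approx: "\<And>x y. x < n \<Longrightarrow> y < n \<Longrightarrow> norm (J $$ (x,y) / s - G $$ (x,y)) \<le> r"
    and i: "i < n" and j: "j < n"
  shows "norm ((P * J * Q) $$ (i,j) / s - (P * G * Q) $$ (i,j))
    \<le> (\<Sum>i<n. \<Sum>x<n. norm (P $$ (i,x))) * (\<Sum>y<n. \<Sum>j<n. norm (Q $$ (y,j))) * r"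
proof -
  have "r \<ge> 0"
    using approx[OF i j] norm_ge_zero order_trans by blast
  have "(P * J * Q) $$ (i,j) / s - (P * G * Q) $$ (i,j) =
      (\<Sum>y<n. \<Sum>x<n. P $$ (i,x) * (J $$ (x,y) / s - G $$ (x,y)) * Q $$ (y,j))"
    unfolding mat_mult3_entry[OF P J Q i j] mat_mult3_entry[OF P G Q i j]
      sum_divide_distrib sum_subtractf[symmetric]
    by (intro sum.cong refl) (simp add: algebra_simps)
  also have "norm \<dots> \<le> (\<Sum>y<n. \<Sum>x<n. norm (P $$ (i,x)) * r * norm (Q $$ (y,j)))"
    unfolding norm_mult
    by (intro order.trans[OF norm_sum] sum_mono order.trans[OF norm_sum])
      (use \<open>r \<ge> 0\<close> in \<open>auto simp: norm_mult intro!: mult_mono approx\<close>)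
  also have "\<dots> = (\<Sum>x<n. norm (P $$ (i,x))) * (\<Sum>y<n. norm (Q $$ (y,j))) * r"
    by (simp add: sum_distrib_left sum_distrib_right mult_ac)
  also have "\<dots> \<le> (\<Sum>i<n. \<Sum>x<n. norm (P $$ (i,x))) * (\<Sum>y<n. \<Sum>j<n. norm (Q $$ (y,j))) * r"
    using i j \<open>r \<ge> 0\<close>
    by (intro mult_right_mono mult_mono member_le_sum[of i "{..<n}" "\<lambda>i. \<Sum>x<n. norm (P $$ (i,x))"]
        sum_mono member_le_sum sum_nonneg) auto
  finally show ?thesis .
qed

lemma jordan_nf_block_eigenvalue:
  fixes A :: "'a :: field mat"
  assumes A: "A \<in> carrier_mat n n" and jnf: "jordan_nf A n_as" and ma: "(m, a) \<in> set n_as"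
  shows "eigenvalue A a"
proof -
  have "m > 0"
    using jnf ma unfolding jordan_nf_def by (metis fst_conv gr0I image_eqI)
  moreover have "m \<le> Polynomial.order a (char_poly A)"
    by (rule jordan_nf_block_size_order_bound[OF jnf ma])
  moreover have "char_poly A \<noteq> 0"
    using degree_monic_char_poly[OF A] by auto
  ultimately have "poly (char_poly A) a = 0"
    using order_root by fastforce
  then show ?thesis
    using eigenvalue_root_char_poly[OF A] by simp
qed

lemma jordan_nf_dim:
  assumes "A \<in> carrier_mat n n" and "jordan_nf A n_as"
  shows "sum_list (map fst n_as) = n"
proof -
  obtain d where "A \<in> carrier_mat d d" "jordan_matrix n_as \<in> carrier_mat d d"
    using assms(2) similar_matD unfolding jordan_nf_def by blast
  then show ?thesis
    using assms(1) by (metis carrier_matD(1) jordan_matrix_dim(1))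
qed

lemma sum_list_mono_eq:
  fixes f g :: "'a \<Rightarrow> nat"
  assumes "\<And>x. x \<in> set xs \<Longrightarrow> f x \<le> g x" and "sum_list (map f xs) = sum_list (map g xs)"
    and "x \<in> set xs"
  shows "f x = g x"
  using assms
proof (induction xs)
  case (Cons y ys)
  have "sum_list (map f ys) \<le> sum_list (map g ys)"
    using Cons.prems(1) by (intro sum_list_mono) auto
  moreover have "f y \<le> g y"
    using Cons.prems(1) by auto
  ultimately have "f y = g y" "sum_list (map f ys) = sum_list (map g ys)"
    using Cons.prems(2) by auto
  then show ?case
    using Cons by auto
qed simp

context
  fixes A :: "complex mat" and n :: nat and n_as
  assumes A: "A \<in> carrier_mat n n" and n: "n > 0" and semisimple: "semisimple A"
    and jnf: "jordan_nf A n_as"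
begin

text \<open>Geometric and algebraic multiplicity of the dominant eigenvalue count its Jordan blocks
  and their total size; equality forces every such block to be 1-by-1.\<close>

lemma semisimple_dominant_block_size:
  assumes ma: "(m, of_real (spectral_radius A)) \<in> set n_as"
  shows "m = 1"
proof -
  let ?ev = "complex_of_real (spectral_radius A)"
  let ?sizes = "map fst (filter (\<lambda>na. snd na = ?ev) n_as)"
  have "eigenvalue A ?ev"
    by (rule jordan_nf_block_eigenvalue[OF A jnf ma])
  moreover have "spectral_radius A \<ge> 0"
    using spectral_radius_mem_max(1)[OF A n] by auto
  ultimately have "dim_gen_eigenspace A ?ev 1 = Polynomial.order ?ev (char_poly A)"
    using semisimple unfolding semisimple_def by auto
  moreover have "[(m, e)\<leftarrow>n_as . e = ?ev] = filter (\<lambda>na. snd na = ?ev) n_as"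
    by (induction n_as) auto
  ultimately have "sum_list (map (min 1) ?sizes) = sum_list (map (\<lambda>x. x) ?sizes)"
    unfolding dim_gen_eigenspace[OF jnf] jordan_nf_order[OF jnf] by simp
  moreover have "m \<in> set ?sizes"
    using ma by force
  ultimately have "min 1 m = m"
    by (intro sum_list_mono_eq[of ?sizes "min 1" "\<lambda>x. x"]) auto
  moreover have "m > 0"
    using jnf ma unfolding jordan_nf_def by (metis fst_conv gr0I image_eqI)
  ultimately show ?thesis
    by simp
qed

lemma semisimple_subdominant_block:
  assumes "(m, a) \<in> set n_as" and "a \<noteq> of_real (spectral_radius A)"
  shows "norm a < spectral_radius A"
proof -
  have "eigenvalue A a"
    by (rule jordan_nf_block_eigenvalue[OF A jnf assms(1)])
  then have "norm a \<le> spectral_radius A"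
    by (intro spectral_radius_mem_max(2)[OF A n]) (auto simp: spectrum_def)
  moreover have "norm a \<noteq> spectral_radius A"
    using semisimple \<open>eigenvalue A a\<close> assms(2) unfolding semisimple_def by auto
  ultimately show ?thesis
    by simp
qed


lemma semisimple_subdominant_gap:
  assumes "spectral_radius A > 0"
  shows "\<exists>mu. 0 < mu \<and> mu < spectral_radius A \<and>
    (\<forall>m a. (m,a) \<in> set n_as \<longrightarrow> a \<noteq> of_real (spectral_radius A) \<longrightarrow> norm a < mu)"
proof -
  let ?lam = "spectral_radius A"
  define S where "S = insert 0 ((\<lambda>(m,a). norm a) ` {(m,a) \<in> set n_as. a \<noteq> of_real ?lam})"
  have "finite S"
    unfolding S_def by (auto intro: finite_subset[of _ "set n_as"])
  have "\<forall>x\<in>S. x < ?lam"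
    using semisimple_subdominant_block assms unfolding S_def by auto
  then have "Max S < ?lam"
    using Max_in[OF \<open>finite S\<close>] unfolding S_def by blast
  moreover have "0 \<le> Max S"
    using \<open>finite S\<close> unfolding S_def by (intro Max_ge) auto
  moreover have "norm a \<le> Max S" if "(m,a) \<in> set n_as" "a \<noteq> of_real ?lam" for m a
    using \<open>finite S\<close> that unfolding S_def by (intro Max_ge) force+
  ultimately show ?thesis
    by (intro exI[of _ "(?lam + Max S) / 2"]) fastforce
qed

end

lemma semisimple_pow_approx:
  fixes A :: "complex mat"
  assumes A: "A \<in> carrier_mat n n" and semisimple: "semisimple A" and pos: "spectral_radius A > 0"
  shows "\<exists>L K q. 0 < q \<and> q < 1 \<and> (\<forall>k i j. i < n \<longrightarrow> j < n \<longrightarrow>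
    norm ((A ^\<^sub>m k) $$ (i,j) / of_real (spectral_radius A) ^ k - L $$ (i,j)) \<le> K * (real k + 1) ^ n * q ^ k)"
proof (cases "n = 0")
  case True
  show ?thesis
    by (rule exI, rule exI, rule exI[where x = "1/2 :: real"]) (simp add: True)
next
  case False
  define lam where "lam = spectral_radius A"
  obtain n_as where jnf: "jordan_nf A n_as"
    using char_poly_factorized[OF A] jordan_nf_exists[OF A] by blast
  obtain P Q where P: "P \<in> carrier_mat n n" and Q: "Q \<in> carrier_mat n n"
    and pow: "\<And>k. A ^\<^sub>m k = P * jordan_matrix n_as ^\<^sub>m k * Q"
    by (rule jordan_nf_powE[OF A jnf]) blast
  have dim: "sum_list (map fst n_as) = n"
    by (rule jordan_nf_dim[OF A jnf])
  obtain mu where mu: "0 < mu" "mu < lam"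
    and subdominant: "\<And>m a. (m,a) \<in> set n_as \<Longrightarrow> a \<noteq> of_real lam \<Longrightarrow> norm a < mu"
    using semisimple_subdominant_gap[OF A _ semisimple jnf] pos False unfolding lam_def by auto
  have dominant: "m = 1" if "(m, of_real lam) \<in> set n_as" for m
    using semisimple_dominant_block_size[OF A _ semisimple jnf] that False unfolding lam_def by simp
  define G where "G = P * jordan_eigenprojection (of_real lam) n_as * Q"
  define K where "K = (\<Sum>i<n. \<Sum>x<n. norm (P $$ (i,x))) * (\<Sum>y<n. \<Sum>j<n. norm (Q $$ (y,j)))
    * max 1 (1/mu) ^ n"
  have "norm ((A ^\<^sub>m k) $$ (i,j) / of_real lam ^ k - G $$ (i,j)) \<le> K * (real k + 1) ^ n * (mu / lam) ^ k"
    if "i < n" "j < n" for k i j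
  proof -
    have "norm ((A ^\<^sub>m k) $$ (i,j) / of_real lam ^ k - G $$ (i,j))
      \<le> (\<Sum>i<n. \<Sum>x<n. norm (P $$ (i,x))) * (\<Sum>y<n. \<Sum>j<n. norm (Q $$ (y,j)))
        * (max 1 (1/mu) ^ n * (real k + 1) ^ n * (mu / lam) ^ k)"
      unfolding pow G_def
    proof (rule mat_mult3_entry_approx[OF P _ _ Q _ that])
      show "jordan_matrix n_as ^\<^sub>m k \<in> carrier_mat n n"
        using dim by (metis jordan_matrix_carrier pow_carrier_mat)
      show "jordan_eigenprojection (of_real lam) n_as \<in> carrier_mat n n"
        unfolding jordan_eigenprojection_def dim[symmetric] by (rule dim_diag_block_mat_square) auto
      show "norm ((jordan_matrix n_as ^\<^sub>m k) $$ (x,y) / of_real lam ^ k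
          - jordan_eigenprojection (of_real lam) n_as $$ (x,y))
        \<le> max 1 (1/mu) ^ n * (real k + 1) ^ n * (mu / lam) ^ k" if "x < n" "y < n" for x y
        using jordan_matrix_pow_approx[where n_as = n_as, OF mu dominant subdominant] that dim by simp
    qed
    then show ?thesis
      unfolding K_def by (simp add: mult_ac)
  qed
  moreover have "0 < mu / lam" "mu / lam < 1"
    using mu by auto
  ultimately show ?thesis
    unfolding lam_def by blast
qed

lemma large_growth_eventually_ge:
  assumes "large_growth E src tgt lam v" and "lam > 1" and "0 < s" "s < 1"
  shows "eventually (\<lambda>n. s ^ n \<le> real (card (paths_from E src tgt v n)) / lam ^ n) sequentially"
proof -
  obtain f :: "nat \<Rightarrow> real" where "f \<in> o(\<lambda>n. real n)"
    and card: "\<And>n. real (card (paths_from E src tgt v n)) = lam powr (real n + f n)"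
    using assms(1) unfolding large_growth_def by blast
  define \<epsilon> where "\<epsilon> = - ln s / ln lam"
  have "\<epsilon> > 0"
    unfolding \<epsilon>_def using assms by (simp add: divide_neg_pos)
  then have "eventually (\<lambda>n. \<bar>f n\<bar> \<le> \<epsilon> * real n) sequentially"
    using landau_o.smallD[OF \<open>f \<in> o(\<lambda>n. real n)\<close>] by simp
  then show ?thesis
  proof eventually_elim
    case (elim n)
    have "s ^ n = s powr real n"
      using assms by (simp add: powr_realpow)
    also have "\<dots> = lam powr (- \<epsilon> * real n)"
      using assms by (simp add: \<epsilon>_def powr_def field_simps)
    also have "\<dots> \<le> lam powr f n"
      using elim assms by (intro powr_mono) auto
    also have "\<dots> = real (card (paths_from E src tgt v n)) / lam ^ n"
      using assms by (simp add: card powr_add powr_realpow)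
    finally show ?case .
  qed
qed

lemma poly_times_geometric_tendsto_0:
  fixes q :: real
  assumes "0 < q" "q < 1"
  shows "(\<lambda>n. K * (real n + 1) ^ d * q ^ n) \<longlonglongrightarrow> 0"
proof -
  have "(\<lambda>n. (real n + 1) ^ d * q ^ n) \<longlonglongrightarrow> 0"
    using assms by real_asymp
  then show ?thesis
    by (simp add: mult.assoc tendsto_mult_right_zero)
qed

lemma tendsto_poly_geometric_rate:
  fixes a :: "nat \<Rightarrow> real"
  assumes "\<And>n. \<bar>a n - l\<bar> \<le> K * (real n + 1) ^ d * q ^ n" and "0 < q" "q < 1"
  shows "a \<longlonglongrightarrow> l"
proof (rule LIM_zero_cancel, rule tendsto_0_le[OF poly_times_geometric_tendsto_0[OF assms(2,3)], where K = 1])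
  show "\<forall>\<^sub>F n in sequentially. norm (a n - l) \<le> norm (K * (real n + 1) ^ d * q ^ n) * 1"
    using assms(1) by (intro always_eventually allI) (simp add: order_trans[OF _ abs_ge_self])
qed

lemma abs_diff_rescale:
  fixes lam :: real
  assumes "lam > 0" and "w > 0"
  shows "c * \<bar>x / (r * lam ^ m) - y * z / w\<bar> =
    c / lam ^ m * \<bar>x / r - (y / lam ^ k) * (z / lam ^ k) / (w / lam ^ (k + m + k))\<bar>"
proof -
  have "(y / lam ^ k) * (z / lam ^ k) / (w / lam ^ (k + m + k)) = lam ^ m * (y * z / w)"
    using assms by (simp add: power_add field_simps)
  moreover have "x / r - lam ^ m * (y * z / w) = lam ^ m * (x / (r * lam ^ m) - y * z / w)"
    using assms by (cases "r = 0") (simp_all add: field_simps)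
  ultimately show ?thesis
    using assms by (simp add: abs_mult)
qed

lemma filterlim_nat_floor_ln: "filterlim (\<lambda>n. nat \<lfloor>ln (real n)\<rfloor>) at_top sequentially"
  by (intro filterlim_compose[OF filterlim_nat_sequentially] filterlim_compose[OF filterlim_floor_sequentially]
      filterlim_compose[OF ln_at_top filterlim_real_sequentially])

lemma filterlim_diff_nat_floor_ln:
  "filterlim (\<lambda>n. n - 2 * nat \<lfloor>ln (real n)\<rfloor>) at_top sequentially"
  unfolding filterlim_sequentially_iff_filterlim_real
proof (rule filterlim_at_top_mono)
  show "filterlim (\<lambda>n. real n - 2 * ln (real n)) at_top sequentially"
    by real_asymp
  have "real n - 2 * ln (real n) \<le> real (n - 2 * nat \<lfloor>ln (real n)\<rfloor>)" for n
  proof -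
    have "real (nat \<lfloor>ln (real n)\<rfloor>) \<le> ln (real n)"
      by (cases "n = 0") auto
    then show ?thesis
      by (cases "2 * nat \<lfloor>ln (real n)\<rfloor> \<le> n") (auto simp: of_nat_diff)
  qed
  then show "\<forall>\<^sub>F n in sequentially. real n - 2 * ln (real n) \<le> real (n - 2 * nat \<lfloor>ln (real n)\<rfloor>)"
    by simp
qed

locale semisimple_graph =
  fixes N :: nat and E :: "'e set" and src tgt :: "'e \<Rightarrow> nat" and v0 :: nat
  assumes graph: "graph_ok N E src tgt" and v0: "v0 < N"
    and semisimple: "semisimple (trans_mat N E src tgt)"
    and lam_gt_1: "spectral_radius (trans_mat N E src tgt) > 1"
    and large_growth: "large_growth E src tgt (spectral_radius (trans_mat N E src tgt)) v0"
begin

abbreviation "M \<equiv> trans_mat N E src tgt"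

abbreviation "lam \<equiv> spectral_radius M"

definition path_limit :: "nat \<Rightarrow> nat \<Rightarrow> real" where
  "path_limit i j = lim (\<lambda>n. real (card (paths_between E src tgt i n j)) / lam ^ n)"

definition \<rho> :: "nat \<Rightarrow> real" where
  "\<rho> i = lim (\<lambda>n. (\<Sum>j<N. Re ((M ^\<^sub>m n) $$ (i, j))) / lam ^ n)"

definition u :: "nat \<Rightarrow> real" where
  "u i = lim (\<lambda>n. Re ((M ^\<^sub>m n) $$ (v0, i)) / lam ^ n)"

definition \<pi> :: "nat \<Rightarrow> real" where
  "\<pi> i = u i * \<rho> i / \<rho> v0"

definition p :: "'e \<Rightarrow> real" where
  "p e = \<rho> (tgt e) / (lam * \<rho> (src e))"

lemma finite_E: "finite E"
  using graph by (simp add: graph_ok_def)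

lemma edge_endpoints_less: "e \<in> E \<Longrightarrow> src e < N \<and> tgt e < N"
  using graph by (simp add: graph_ok_def)

lemma M_pow_entry: "i < N \<Longrightarrow> j < N \<Longrightarrow> Re ((M ^\<^sub>m n) $$ (i, j)) = real (card (paths_between E src tgt i n j))"
  by (simp add: trans_mat_pow_entry[OF graph])

lemma path_limit_rate:
  "\<exists>K q. 0 < q \<and> q < 1 \<and> (\<forall>i j n. i < N \<longrightarrow> j < N \<longrightarrow>
    \<bar>real (card (paths_between E src tgt i n j)) / lam ^ n - path_limit i j\<bar> \<le> K * (real n + 1) ^ N * q ^ n)"
proof -
  obtain L K q where q: "0 < q" "q < 1" and approx: "\<forall>n i j. i < N \<longrightarrow> j < N \<longrightarrow>
      norm ((M ^\<^sub>m n) $$ (i,j) / of_real lam ^ n - L $$ (i,j)) \<le> K * (real n + 1) ^ N * q ^ n"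
    using semisimple_pow_approx[OF trans_mat_carrier semisimple] lam_gt_1 by auto
  have bound: "\<bar>real (card (paths_between E src tgt i n j)) / lam ^ n - Re (L $$ (i,j))\<bar>
      \<le> K * (real n + 1) ^ N * q ^ n" if "i < N" "j < N" for i j n
  proof -
    have "real (card (paths_between E src tgt i n j)) / lam ^ n - Re (L $$ (i,j)) =
        Re ((M ^\<^sub>m n) $$ (i,j) / of_real lam ^ n - L $$ (i,j))"
      using M_pow_entry[OF that] by (simp flip: of_real_power add: Re_divide_of_real)
    also have "\<bar>\<dots>\<bar> \<le> norm ((M ^\<^sub>m n) $$ (i,j) / of_real lam ^ n - L $$ (i,j))"
      by (rule abs_Re_le_cmod)
    also have "\<dots> \<le> K * (real n + 1) ^ N * q ^ n"
      using approx that by blast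
    finally show ?thesis .
  qed
  have "(\<lambda>n. real (card (paths_between E src tgt i n j)) / lam ^ n) \<longlonglongrightarrow> Re (L $$ (i,j))"
    if "i < N" "j < N" for i j
    using bound[OF that] q by (rule tendsto_poly_geometric_rate)
  then have limit: "path_limit i j = Re (L $$ (i,j))" if "i < N" "j < N" for i j
    unfolding path_limit_def using that by (simp add: limI)
  show ?thesis
    by (rule exI[of _ K], rule exI[of _ q]) (use q bound limit in auto)
qed

lemma path_limit_tendsto:
  assumes "i < N" "j < N"
  shows "(\<lambda>n. real (card (paths_between E src tgt i n j)) / lam ^ n) \<longlonglongrightarrow> path_limit i j"
proof -
  obtain K q where "0 < q" "q < 1" and "\<forall>i j n. i < N \<longrightarrow> j < N \<longrightarrow>
      \<bar>real (card (paths_between E src tgt i n j)) / lam ^ n - path_limit i j\<bar> \<le> K * (real n + 1) ^ N * q ^ n"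
    using path_limit_rate by blast
  then show ?thesis
    using assms by (intro tendsto_poly_geometric_rate) auto
qed

lemma card_paths_from_tendsto:
  assumes "i < N"
  shows "(\<lambda>n. real (card (paths_from E src tgt i n)) / lam ^ n) \<longlonglongrightarrow> (\<Sum>j<N. path_limit i j)"
    and "\<rho> i = (\<Sum>j<N. path_limit i j)"
proof -
  have card: "real (card (paths_from E src tgt i n)) / lam ^ n =
      (\<Sum>j<N. real (card (paths_between E src tgt i n j)) / lam ^ n)" for n
    by (simp add: card_paths_from_eq_sum[OF graph assms] sum_divide_distrib)
  show lim: "(\<lambda>n. real (card (paths_from E src tgt i n)) / lam ^ n) \<longlonglongrightarrow> (\<Sum>j<N. path_limit i j)"
    unfolding card using assms by (intro tendsto_sum path_limit_tendsto) auto
  have "(\<Sum>j<N. Re ((M ^\<^sub>m n) $$ (i, j))) = real (card (paths_from E src tgt i n))" for n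
    using assms by (simp add: M_pow_entry card_paths_from_eq_sum[OF graph assms])
  then show "\<rho> i = (\<Sum>j<N. path_limit i j)"
    unfolding \<rho>_def using lim by (simp add: limI)
qed

lemma \<rho>_tendsto: "i < N \<Longrightarrow> (\<lambda>n. real (card (paths_from E src tgt i n)) / lam ^ n) \<longlonglongrightarrow> \<rho> i"
  using card_paths_from_tendsto by simp

lemma u_eq_path_limit: "i < N \<Longrightarrow> u i = path_limit v0 i"
  unfolding u_def using path_limit_tendsto[OF v0] by (simp add: M_pow_entry v0 limI)

lemma \<rho>_nonneg: "i < N \<Longrightarrow> \<rho> i \<ge> 0"
  by (rule tendsto_lowerbound[OF \<rho>_tendsto]) (use lam_gt_1 in auto)

lemma \<rho>_tgt_le:
  assumes "e \<in> E"
  shows "\<rho> (tgt e) \<le> lam * \<rho> (src e)"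
proof (rule LIMSEQ_le[OF \<rho>_tendsto])
  show "(\<lambda>n. lam * (real (card (paths_from E src tgt (src e) (Suc n))) / lam ^ Suc n)) \<longlonglongrightarrow> lam * \<rho> (src e)"
    using assms edge_endpoints_less by (intro tendsto_mult_left LIMSEQ_Suc[OF \<rho>_tendsto]) auto
  show "\<exists>N. \<forall>n\<ge>N. real (card (paths_from E src tgt (tgt e) n)) / lam ^ n
      \<le> lam * (real (card (paths_from E src tgt (src e) (Suc n))) / lam ^ Suc n)"
    using card_paths_from_tgt_le[OF finite_E assms] lam_gt_1 by (auto intro!: divide_right_mono)
qed (use assms edge_endpoints_less in auto)

lemma card_paths_from_rate:
  "\<exists>K q. 0 < q \<and> q < 1 \<and> (\<forall>i n. i < N \<longrightarrow>
    \<bar>real (card (paths_from E src tgt i n)) / lam ^ n - \<rho> i\<bar> \<le> K * (real n + 1) ^ N * q ^ n)"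
proof -
  obtain K q where q: "0 < q" "q < 1" and rate: "\<forall>i j n. i < N \<longrightarrow> j < N \<longrightarrow>
      \<bar>real (card (paths_between E src tgt i n j)) / lam ^ n - path_limit i j\<bar> \<le> K * (real n + 1) ^ N * q ^ n"
    using path_limit_rate by blast
  have "\<bar>real (card (paths_from E src tgt i n)) / lam ^ n - \<rho> i\<bar> \<le> real N * K * (real n + 1) ^ N * q ^ n"
    if "i < N" for i n
  proof -
    have "real (card (paths_from E src tgt i n)) / lam ^ n - \<rho> i =
        (\<Sum>j<N. real (card (paths_between E src tgt i n j)) / lam ^ n - path_limit i j)"
      using card_paths_from_tendsto(2)[OF that]
      by (simp add: card_paths_from_eq_sum[OF graph that] sum_divide_distrib sum_subtractf)
    also have "\<bar>\<dots>\<bar> \<le> (\<Sum>j<N. K * (real n + 1) ^ N * q ^ n)"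
      using rate that by (intro order_trans[OF sum_abs] sum_mono) auto
    finally show ?thesis
      by simp
  qed
  then show ?thesis
    using q by (intro exI[of _ "real N * K"] exI[of _ q]) auto
qed

lemma \<rho>_v0_pos: "\<rho> v0 > 0"
proof (rule ccontr)
  assume "\<not> \<rho> v0 > 0"
  then have "\<rho> v0 = 0"
    using \<rho>_nonneg[OF v0] by simp
  obtain K q where q: "0 < q" "q < 1" and rate: "\<forall>i n. i < N \<longrightarrow>
      \<bar>real (card (paths_from E src tgt i n)) / lam ^ n - \<rho> i\<bar> \<le> K * (real n + 1) ^ N * q ^ n"
    using card_paths_from_rate by blast
  define s where "s = sqrt q"
  have s: "0 < s" "s < 1" "q ^ n = s ^ n * s ^ n" for n
    using q by (auto simp: s_def power_mult_distrib[symmetric])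
  \<comment> \<open>large growth bounds the normalised count below by s^n, the rate bounds it above by about q^n = s^(2n)\<close>
  have "eventually (\<lambda>n. s ^ n \<le> real (card (paths_from E src tgt v0 n)) / lam ^ n) sequentially"
    using large_growth_eventually_ge[OF large_growth lam_gt_1 s(1,2)] .
  moreover have "eventually (\<lambda>n. K * (real n + 1) ^ N * s ^ n < 1) sequentially"
    using poly_times_geometric_tendsto_0[OF s(1,2)] by (rule order_tendstoD(2)) simp
  ultimately have "eventually (\<lambda>_. False) sequentially"
  proof eventually_elim
    case (elim n)
    have "real (card (paths_from E src tgt v0 n)) / lam ^ n \<le> K * (real n + 1) ^ N * q ^ n"
      using rate v0 \<open>\<rho> v0 = 0\<close> by (metis abs_le_D1 diff_zero)
    then have "s ^ n \<le> (K * (real n + 1) ^ N * s ^ n) * s ^ n"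
      using elim(1) by (simp add: s(3) mult_ac)
    also have "\<dots> < s ^ n"
      using elim(2) s by simp
    finally show False
      by simp
  qed
  then show False
    by simp
qed

lemma markov_prob_walk:
  assumes "q \<in> paths_from E src tgt a m" and "q \<noteq> []"
  shows "markov_prob E src tgt \<pi> p q = u a * \<rho> (walk_end tgt a q) / (\<rho> v0 * lam ^ m)"
proof -
  have a: "a = src (hd q)" and "set q \<subseteq> E" "length q = m" "is_walk_from src tgt a q"
    using assms by (cases q; auto simp: paths_from_def)+
  then have "a < N"
    using edge_endpoints_less assms(2) by (cases q) auto
  have walk: "markov_prob_from src tgt p a q * (lam ^ m * \<rho> a) = \<rho> (walk_end tgt a q)"
    unfolding p_def \<open>length q = m\<close>[symmetric]
    by (rule markov_prob_from_walk[OF graph _ \<rho>_nonneg \<rho>_tgt_le \<open>a < N\<close> \<open>set q \<subseteq> E\<close> \<open>is_walk_from src tgt a q\<close>])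
      (use lam_gt_1 in auto)
  show ?thesis
  proof (cases "\<rho> a = 0")
    case True
    then show ?thesis
      using walk \<open>set q \<subseteq> E\<close> assms(2) by (simp add: markov_prob_nonempty a[symmetric] \<pi>_def)
  next
    case False
    then show ?thesis
      using walk \<open>set q \<subseteq> E\<close> assms(2) lam_gt_1 \<rho>_v0_pos
      by (simp add: markov_prob_nonempty a[symmetric] \<pi>_def field_simps)
  qed
qed

lemma tv_dist_middle_law_eq:
  assumes "m \<ge> 1"
  shows "tv_dist {q. set q \<subseteq> E \<and> length q = m} (markov_prob E src tgt \<pi> p) (middle_law E src tgt v0 k (k + m + k))
    = 1/2 * (\<Sum>a<N. \<Sum>b<N. real (card (paths_between E src tgt a m b)) *
        \<bar>u a * \<rho> b / (\<rho> v0 * lam ^ m) - real (card (paths_between E src tgt v0 k a)) *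
          real (card (paths_from E src tgt b k)) / real (card (paths_from E src tgt v0 (k + m + k)))\<bar>)"
proof -
  define h where "h a b = \<bar>u a * \<rho> b / (\<rho> v0 * lam ^ m) - real (card (paths_between E src tgt v0 k a)) *
      real (card (paths_from E src tgt b k)) / real (card (paths_from E src tgt v0 (k + m + k)))\<bar>" for a b
  let ?H = "\<lambda>q. \<bar>markov_prob E src tgt \<pi> p q - middle_law E src tgt v0 k (k + m + k) q\<bar>"
  have "(\<Sum>q\<in>{q. set q \<subseteq> E \<and> length q = m}. ?H q) = (\<Sum>a<N. \<Sum>q\<in>paths_from E src tgt a m. ?H q)"
    by (rule sum_lists_by_start[OF graph assms])
      (auto simp: markov_prob_not_walk middle_law_not_walk)
  also have "\<dots> = (\<Sum>a<N. \<Sum>q\<in>paths_from E src tgt a m. h a (walk_end tgt a q))"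
  proof (intro sum.cong refl)
    fix a q assume "q \<in> paths_from E src tgt a m"
    moreover have "q \<noteq> []"
      using calculation assms by (auto simp: paths_from_def)
    ultimately show "?H q = h a (walk_end tgt a q)"
      by (simp add: h_def markov_prob_walk middle_law_walk)
  qed
  also have "\<dots> = (\<Sum>a<N. \<Sum>b<N. real (card (paths_between E src tgt a m b)) * h a b)"
    by (intro sum.cong refl sum_paths_from_by_end[OF graph]) auto
  finally show ?thesis
    by (simp add: tv_dist_def h_def)
qed

lemma card_paths_from_v0_pos: "card (paths_from E src tgt v0 n) > 0"
proof -
  obtain f where "\<And>n. real (card (paths_from E src tgt v0 n)) = lam powr (real n + f n)"
    using large_growth unfolding large_growth_def by blast
  then have "real (card (paths_from E src tgt v0 n)) > 0"
    using lam_gt_1 by simp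
  then show ?thesis
    by simp
qed

lemma tv_dist_middle_law_normalised:
  assumes "m \<ge> 1"
  shows "tv_dist {q. set q \<subseteq> E \<and> length q = m} (markov_prob E src tgt \<pi> p) (middle_law E src tgt v0 k (k + m + k))
    = 1/2 * (\<Sum>a<N. \<Sum>b<N. real (card (paths_between E src tgt a m b)) / lam ^ m *
        \<bar>u a * \<rho> b / \<rho> v0 - real (card (paths_between E src tgt v0 k a)) / lam ^ k *
          (real (card (paths_from E src tgt b k)) / lam ^ k) /
          (real (card (paths_from E src tgt v0 (k + m + k))) / lam ^ (k + m + k))\<bar>)"
  using tv_dist_middle_law_eq[OF assms] lam_gt_1 card_paths_from_v0_pos
  by (simp add: abs_diff_rescale[where k = k])

lemma tv_dist_middle_law_tendsto_0:
  assumes k: "filterlim k at_top sequentially" and m: "filterlim (\<lambda>n. n - 2 * k n) at_top sequentially"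
  shows "(\<lambda>n. tv_dist {q. set q \<subseteq> E \<and> length q = n - 2 * k n}
    (markov_prob E src tgt \<pi> p) (middle_law E src tgt v0 (k n) n)) \<longlonglongrightarrow> 0"
proof -
  define m where "m n = n - 2 * k n" for n
  define C where "C i n = real (card (paths_from E src tgt i n)) / lam ^ n" for i n
  define P where "P i n j = real (card (paths_between E src tgt i n j)) / lam ^ n" for i n j
  define T where "T n a b = P a (m n) b * \<bar>u a * \<rho> b / \<rho> v0 - P v0 (k n) a * C b (k n) / C v0 n\<bar>"
    for n a b
  have "tv_dist {q. set q \<subseteq> E \<and> length q = m n} (markov_prob E src tgt \<pi> p) (middle_law E src tgt v0 (k n) n)
      = 1/2 * (\<Sum>a<N. \<Sum>b<N. T n a b)" if "m n \<ge> 1" for n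
  proof -
    have "k n + m n + k n = n"
      using that by (simp add: m_def)
    then show ?thesis
      using tv_dist_middle_law_normalised[OF that, of "k n"] by (simp add: T_def P_def C_def)
  qed
  moreover have "eventually (\<lambda>n. m n \<ge> 1) sequentially"
    using m unfolding m_def by (simp add: filterlim_at_top)
  ultimately have ev: "eventually (\<lambda>n. 1/2 * (\<Sum>a<N. \<Sum>b<N. T n a b) =
      tv_dist {q. set q \<subseteq> E \<and> length q = n - 2 * k n} (markov_prob E src tgt \<pi> p)
        (middle_law E src tgt v0 (k n) n)) sequentially"
    unfolding m_def by (auto elim: eventually_mono)
  moreover have "(\<lambda>n. T n a b) \<longlonglongrightarrow> 0" if "a < N" "b < N" for a b
  proof -
    have "(\<lambda>n. T n a b) \<longlonglongrightarrow> path_limit a b * \<bar>u a * \<rho> b / \<rho> v0 - u a * \<rho> b / \<rho> v0\<bar>"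
      unfolding T_def P_def C_def m_def u_eq_path_limit[OF that(1)]
      using that \<rho>_v0_pos
      by (intro tendsto_mult tendsto_rabs tendsto_diff tendsto_const tendsto_divide
          filterlim_compose[OF path_limit_tendsto m] filterlim_compose[OF path_limit_tendsto k]
          filterlim_compose[OF \<rho>_tendsto k] \<rho>_tendsto v0) auto
    then show ?thesis
      by simp
  qed
  then have "(\<lambda>n. 1/2 * (\<Sum>a<N. \<Sum>b<N. T n a b)) \<longlonglongrightarrow> 1/2 * (\<Sum>a<N. \<Sum>b<N. 0)"
    by (intro tendsto_mult tendsto_const tendsto_sum) auto
  then show ?thesis
    using Lim_transform_eventually[OF _ ev] by simp
qed

end

theorem lemma6p1:
  fixes N :: nat and E :: "'e set" and src tgt :: "'e \<Rightarrow> nat" and v0 :: nat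
  defines "M \<equiv> trans_mat N E src tgt"
  defines "lam \<equiv> spectral_radius M"
  defines "\<rho> \<equiv> (\<lambda>i. lim (\<lambda>n. (\<Sum>j<N. Re ((M ^\<^sub>m n) $$ (i, j))) / lam ^ n))"
  defines "u \<equiv> (\<lambda>i. lim (\<lambda>n. Re ((M ^\<^sub>m n) $$ (v0, i)) / lam ^ n))"
  defines "\<pi> \<equiv> (\<lambda>i. u i * \<rho> i / \<rho> v0)"
  defines "p \<equiv> (\<lambda>e. \<rho> (tgt e) / (lam * \<rho> (src e)))"
  defines "k \<equiv> (\<lambda>n::nat. nat \<lfloor>ln (real n)\<rfloor>)"
  defines "lamt \<equiv> (\<lambda>n::nat. \<lambda>q. real (card {\<gamma> \<in> paths_from E src tgt v0 n.
                          take (n - 2 * k n) (drop (k n) \<gamma>) = q})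
                     / real (card (paths_from E src tgt v0 n)))"
  assumes "graph_ok N E src tgt"
    and "v0 < N"
    and "semisimple M"
    and "lam > 1"
    and "large_growth E src tgt lam v0"
  shows "(\<lambda>n. tv_dist {q. set q \<subseteq> E \<and> length q = n - 2 * k n}
                     (markov_prob E src tgt \<pi> p) (lamt n)) \<longlonglongrightarrow> 0"
proof -
  interpret G: semisimple_graph N E src tgt v0
    using assms(9-13) unfolding M_def lam_def by unfold_locales
  have "\<rho> = G.\<rho>" "u = G.u"
    by (simp_all add: fun_eq_iff \<rho>_def u_def G.\<rho>_def G.u_def M_def lam_def)
  then have "\<pi> = G.\<pi>" "p = G.p"
    by (simp_all add: fun_eq_iff \<pi>_def p_def G.\<pi>_def G.p_def M_def lam_def)
  moreover have "lamt n = middle_law E src tgt v0 (k n) n" for n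
    by (simp add: fun_eq_iff lamt_def middle_law_def)
  ultimately show ?thesis
    using G.tv_dist_middle_law_tendsto_0[OF filterlim_nat_floor_ln filterlim_diff_nat_floor_ln]
    by (simp add: k_def)
qed

end
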